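(* Let $c>0$, $\epsilon>0$, $\delta\in(0,1)$, let $N\ge1$ be an integer, let $m\ge2$ be an integer and $\hat v\ge0$. Put $L=\ln(3N/\delta)$, $\kappa=\frac13+\frac1{2L}$, $$\epsilon^{\hat v}=\frac{2c^2L}{3m}+\sqrt{\kappa\Big(\frac{c^2L}{m-1}\Big)^2+\frac{2c^2\hat vL}{m}},\qquad \epsilon^{\hat B}=\frac{cL}{3m}+\sqrt{\frac{2(\hat v+\epsilon^{\hat v})L}{m}}.$$ If $\epsilon^{\hat B}\le\epsilon$, then $m>\Big(\frac13+\sqrt{\frac{4+2\sqrt3}{3}}\Big)\cdot\frac{cL}{\epsilon}$.
   Context: In the paper, $N=|\mathcal{I}|$ is the number of (player, pure profile) utility indices, $m$ is the number of samples of a given utility, $\hat v$ is their sample variance, $c$ bounds the range of sampled utilities, and $\epsilon^{\hat B}$ is the empirical Bennett deviation bound for the empirical mean. *)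

theory Defs
  imports Complex_Main
begin

end

theory Submission
  imports Defs
begin

text \<open>Write \<open>A = cL/m\<close>. Since \<open>\<kappa> \<ge> 1/3\<close> and \<open>m - 1 < m\<close>, the square root in \<open>\<epsilon>\<^sup>v\<close> exceeds
  \<open>c\<^sup>2L/(\<surd>3 m)\<close>, so \<open>\<epsilon>\<^sup>v > (2/3 + 1/\<surd>3) c\<^sup>2L/m\<close> for every \<open>v \<ge> 0\<close>. Dropping the nonnegative \<open>v\<close> inside
  \<open>\<epsilon>\<^sup>B\<close> then gives \<open>\<epsilon>\<^sup>B > A/3 + A \<surd>(2(2/3 + 1/\<surd>3)) = (1/3 + \<surd>((4 + 2\<surd>3)/3)) A\<close>,
  and \<open>\<epsilon> \<ge> \<epsilon>\<^sup>B\<close> rearranges to the bound on \<open>m\<close>.\<close>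

lemma ln_three_mult_div_pos:
  fixes delta :: real and N :: nat
  assumes "N \<ge> 1" and "0 < delta" and "delta < 1"
  shows "ln (3 * real N / delta) > 0"
proof -
  have "3 * real N > delta"
    using assms by linarith
  then show ?thesis
    using assms(2) by simp
qed

lemma sqrt_mult_less_sqrt:
  fixes q x y :: real
  assumes "x \<ge> 0" and "q * x\<^sup>2 < y"
  shows "sqrt q * x < sqrt y"
proof -
  have "sqrt q * x = sqrt (q * x\<^sup>2)"
    using assms(1) by (simp add: real_sqrt_mult)
  also have "\<dots> < sqrt y"
    using assms(2) by simp
  finally show ?thesis .
qed

lemma empirical_variance_bound_gt:
  fixes a m kappa w :: real
  assumes "a > 0" and "m > 1" and "kappa \<ge> 1/3" and "w \<ge> 0"
  shows "2 * a / (3 * m) + sqrt (kappa * (a / (m - 1))\<^sup>2 + w) > (2/3 + 1 / sqrt 3) * (a / m)"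
proof -
  have "(a / m) / sqrt 3 < (a / (m - 1)) / sqrt 3"
    using assms(1,2) by (intro divide_strict_right_mono divide_strict_left_mono) auto
  also have "\<dots> = sqrt ((a / (m - 1))\<^sup>2 / 3)"
    using assms(1,2) by (simp add: real_sqrt_divide)
  also have "\<dots> \<le> sqrt (kappa * (a / (m - 1))\<^sup>2 + w)"
    using assms(3,4) mult_right_mono[OF assms(3), of "(a / (m - 1))\<^sup>2"] by simp
  finally show ?thesis
    by (simp add: algebra_simps)
qed

lemma double_two_thirds_plus_inverse_sqrt_3:
  "2 * (2/3 + 1 / sqrt 3) = (4 + 2 * sqrt 3) / (3::real)"
proof -
  have "1 / sqrt 3 = sqrt 3 / (3::real)"
    by (simp add: field_simps)
  then show ?thesis
    by simp
qed

theorem lemma7: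
  fixes c eps delta v_hat :: real and N m :: nat
  assumes "c > 0" and "eps > 0" and "0 < delta" and "delta < 1"
    and "N \<ge> 1" and "m \<ge> 2" and "v_hat \<ge> 0"
  defines "L \<equiv> ln (3 * real N / delta)"
  defines "kappa \<equiv> 1/3 + 1 / (2 * L)"
  defines "eps_v \<equiv> 2 * c^2 * L / (3 * real m)
             + sqrt (kappa * (c^2 * L / (real m - 1))^2 + 2 * c^2 * v_hat * L / real m)"
  defines "eps_B \<equiv> c * L / (3 * real m) + sqrt (2 * (v_hat + eps_v) * L / real m)"
  assumes "eps_B \<le> eps"
  shows "real m > (1/3 + sqrt ((4 + 2 * sqrt 3) / 3)) * (c * L / eps)"
proof -
  define A where "A = c * L / real m"
  define s where "s = sqrt ((4 + 2 * sqrt 3) / 3)"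
  have L_pos: "L > 0"
    unfolding L_def using assms(3-5) by (intro ln_three_mult_div_pos)
  have m_pos: "real m > 0"
    using assms(6) by simp
  have A_pos: "A > 0"
    unfolding A_def using assms(1) L_pos m_pos by simp
  have "kappa \<ge> 1/3"
    unfolding kappa_def using L_pos by simp
  then have "eps_v > (2/3 + 1 / sqrt 3) * (c^2 * L / real m)"
    using empirical_variance_bound_gt[of "c^2 * L" "real m" kappa "2 * c^2 * v_hat * L / real m"]
      assms(1,6,7) L_pos
    unfolding eps_v_def by (simp add: mult.assoc)
  have "(4 + 2 * sqrt 3) / 3 * A\<^sup>2 = 2 * ((2/3 + 1 / sqrt 3) * (c^2 * L / real m)) * L / real m"
    unfolding A_def double_two_thirds_plus_inverse_sqrt_3[symmetric] by (simp add: power2_eq_square)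
  also have "\<dots> < 2 * eps_v * L / real m"
    using \<open>eps_v > _\<close> L_pos m_pos by (intro divide_strict_right_mono mult_strict_right_mono) auto
  also have "\<dots> \<le> 2 * (v_hat + eps_v) * L / real m"
    using assms(7) L_pos m_pos by (intro divide_right_mono mult_right_mono) auto
  finally have "(4 + 2 * sqrt 3) / 3 * A\<^sup>2 < 2 * (v_hat + eps_v) * L / real m" .
  then have "s * A < sqrt (2 * (v_hat + eps_v) * L / real m)"
    unfolding s_def using A_pos by (intro sqrt_mult_less_sqrt) auto
  then have "(1/3 + s) * A < eps"
    using assms(12) unfolding eps_B_def A_def by (simp add: algebra_simps)
  then show ?thesis
    unfolding s_def A_def using assms(2) m_pos by (simp add: field_simps)
qed

end
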